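(* Let $X$ be a prelength space and $Y$ a metric space. For any $f\in\mathfrak{C}(X\to Y)$, the function $\mathrm{ap}(f):\mathfrak{C}(X)\to\mathfrak{C}(Y)$ is uniformly continuous with modulus $\lambda\varepsilon.\,\mu_{f(\varepsilon/3)}(\tfrac{\varepsilon}{3})$, where $\mu_{f(\varepsilon/3)}$ is the modulus of the uniformly continuous function $f(\tfrac{\varepsilon}{3}):X\to Y$.
   Context: $\mathbb{Q}^+$ denotes the strictly positive rationals; all $\varepsilon,\delta$ (with indices) range over $\mathbb{Q}^+$. A metric space is a triple $(X,\asymp,B)$ where $\asymp$ is an equivalence relation on $X$ and $B$ assigns to each $\varepsilon\in\mathbb{Q}^+$ a binary relation $B_\varepsilon$ on $X$ respecting $\asymp$, such that: (1) each $B_\varepsilon$ is reflexive; (2) each $B_\varepsilon$ is symmetric; (3) if $B_{\varepsilon_1}(a,b)$ and $B_{\varepsilon_2}(b,c)$ then $B_{\varepsilon_1+\varepsilon_2}(a,c)$; (4) if $B_{\varepsilon+\delta}(a,b)$ for all $\delta$, then $B_\varepsilon(a,b)$; (5) if $B_\varepsilon(a,b)$ for all $\varepsilon$, then $a\asymp b$. A prelength space is a metric space such that for all $a,b,\varepsilon,\delta_1,\delta_2$ with $\varepsilon<\delta_1+\delta_2$ and $B_\varepsilon(a,b)$ there exists $c$ with $B_{\delta_1}(a,c)$ and $B_{\delta_2}(c,b)$. A regular function over a metric space $W$ is a function $x:\mathbb{Q}^+\to W$ such that $B_{\varepsilon_1+\varepsilon_2}(x(\varepsilon_1),x(\varepsilon_2))$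 for all $\varepsilon_1,\varepsilon_2$; $\mathfrak{C}(W)$ is the metric space of regular functions with $x\asymp y$ iff $B_{2\varepsilon}(x(\varepsilon),y(\varepsilon))$ for all $\varepsilon$ and $B'_\varepsilon(x,y)$ iff $B_{\varepsilon+\delta_1+\delta_2}(x(\delta_1),y(\delta_2))$ for all $\delta_1,\delta_2$. A uniformly continuous function $g:X\to Y$ is a pair of a function and a modulus $\mu_g$ with $B^X_{\mu_g(\varepsilon)}(x_1,x_2)\Rightarrow B^Y_\varepsilon(g(x_1),g(x_2))$. $X\to Y$ is the metric space of uniformly continuous functions with $B_\varepsilon(g,h)$ iff $B^Y_\varepsilon(g(a),h(a))$ for all $a$, and $g\asymp h$ iff $g(a)\asymp h(a)$ for all $a$. $\mathrm{map}(g)(x)=\lambda\varepsilon.\,g(x(\mu_g(\varepsilon)))$, and for $f\in\mathfrak{C}(X\to Y)$, $\mathrm{ap}(f)(x)=\lambda\varepsilon.\,\mathrm{map}(f(\tfrac{\varepsilon}{2}))(x)(\tfrac{\varepsilon}{2})$. *)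

theory Defs
  imports Complex_Main
begin

text \<open>A metric space is given by a carrier set S (elements of type 'a), an equivalence
  relation E on S, and a family of ball relations B indexed by rationals; only positive
  rationals are meaningful (all quantifiers over epsilons are restricted to 0 < e).\<close>

definition msp :: "'a set \<Rightarrow> ('a \<Rightarrow> 'a \<Rightarrow> bool) \<Rightarrow> (rat \<Rightarrow> 'a \<Rightarrow> 'a \<Rightarrow> bool) \<Rightarrow> bool" where
  "msp S E B \<longleftrightarrow>
     (\<forall>a\<in>S. E a a) \<and>
     (\<forall>a\<in>S. \<forall>b\<in>S. E a b \<longrightarrow> E b a) \<and>
     (\<forall>a\<in>S. \<forall>b\<in>S. \<forall>c\<in>S. E a b \<longrightarrow> E b c \<longrightarrow> E a c) \<and>
     (\<forall>e>0. \<forall>a\<in>S. \<forall>a'\<in>S. \<forall>b\<in>S. \<forall>b'\<in>S. E a a' \<longrightarrow> E b b' \<longrightarrow> B e a b \<longrightarrow> B e a' b') \<and>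
     (\<forall>e>0. \<forall>a\<in>S. B e a a) \<and>
     (\<forall>e>0. \<forall>a\<in>S. \<forall>b\<in>S. B e a b \<longrightarrow> B e b a) \<and>
     (\<forall>e1>0. \<forall>e2>0. \<forall>a\<in>S. \<forall>b\<in>S. \<forall>c\<in>S. B e1 a b \<longrightarrow> B e2 b c \<longrightarrow> B (e1 + e2) a c) \<and>
     (\<forall>e>0. \<forall>a\<in>S. \<forall>b\<in>S. (\<forall>d>0. B (e + d) a b) \<longrightarrow> B e a b) \<and>
     (\<forall>a\<in>S. \<forall>b\<in>S. (\<forall>e>0. B e a b) \<longrightarrow> E a b)"

definition prelength :: "'a set \<Rightarrow> ('a \<Rightarrow> 'a \<Rightarrow> bool) \<Rightarrow> (rat \<Rightarrow> 'a \<Rightarrow> 'a \<Rightarrow> bool) \<Rightarrow> bool" where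
  "prelength S E B \<longleftrightarrow> msp S E B \<and>
     (\<forall>a\<in>S. \<forall>b\<in>S. \<forall>e>0. \<forall>d1>0. \<forall>d2>0. e < d1 + d2 \<longrightarrow> B e a b \<longrightarrow>
        (\<exists>c\<in>S. B d1 a c \<and> B d2 c b))"

text \<open>Regular functions (completion): carrier, equivalence and balls.\<close>

definition reg :: "'a set \<Rightarrow> (rat \<Rightarrow> 'a \<Rightarrow> 'a \<Rightarrow> bool) \<Rightarrow> (rat \<Rightarrow> 'a) set" where
  "reg S B = {x. (\<forall>e>0. x e \<in> S) \<and> (\<forall>e1>0. \<forall>e2>0. B (e1 + e2) (x e1) (x e2))}"

definition C_eq :: "(rat \<Rightarrow> 'a \<Rightarrow> 'a \<Rightarrow> bool) \<Rightarrow> (rat \<Rightarrow> 'a) \<Rightarrow> (rat \<Rightarrow> 'a) \<Rightarrow> bool" where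
  "C_eq B x y \<longleftrightarrow> (\<forall>e>0. B (2 * e) (x e) (y e))"

definition C_ball :: "(rat \<Rightarrow> 'a \<Rightarrow> 'a \<Rightarrow> bool) \<Rightarrow> rat \<Rightarrow> (rat \<Rightarrow> 'a) \<Rightarrow> (rat \<Rightarrow> 'a) \<Rightarrow> bool" where
  "C_ball B e x y \<longleftrightarrow> (\<forall>d1>0. \<forall>d2>0. B (e + d1 + d2) (x d1) (y d2))"

definition uc :: "'a set \<Rightarrow> (rat \<Rightarrow> 'a \<Rightarrow> 'a \<Rightarrow> bool) \<Rightarrow> 'b set \<Rightarrow> (rat \<Rightarrow> 'b \<Rightarrow> 'b \<Rightarrow> bool)
                  \<Rightarrow> (('a \<Rightarrow> 'b) \<times> (rat \<Rightarrow> rat)) set" where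
  "uc SX BX SY BY = {(g, \<mu>).
      (\<forall>x\<in>SX. g x \<in> SY) \<and> (\<forall>e>0. 0 < \<mu> e) \<and>
      (\<forall>e>0. \<forall>x1\<in>SX. \<forall>x2\<in>SX. BX (\<mu> e) x1 x2 \<longrightarrow> BY e (g x1) (g x2))}"

definition fun_eq :: "'a set \<Rightarrow> ('b \<Rightarrow> 'b \<Rightarrow> bool)
                      \<Rightarrow> ('a \<Rightarrow> 'b) \<times> (rat \<Rightarrow> rat) \<Rightarrow> ('a \<Rightarrow> 'b) \<times> (rat \<Rightarrow> rat) \<Rightarrow> bool" where
  "fun_eq SX EY g h \<longleftrightarrow> (\<forall>a\<in>SX. EY (fst g a) (fst h a))"

definition fun_ball :: "'a set \<Rightarrow> (rat \<Rightarrow> 'b \<Rightarrow> 'b \<Rightarrow> bool)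
                      \<Rightarrow> rat \<Rightarrow> ('a \<Rightarrow> 'b) \<times> (rat \<Rightarrow> rat) \<Rightarrow> ('a \<Rightarrow> 'b) \<times> (rat \<Rightarrow> rat) \<Rightarrow> bool" where
  "fun_ball SX BY e g h \<longleftrightarrow> (\<forall>a\<in>SX. BY e (fst g a) (fst h a))"

definition cmap :: "('a \<Rightarrow> 'b) \<times> (rat \<Rightarrow> rat) \<Rightarrow> (rat \<Rightarrow> 'a) \<Rightarrow> (rat \<Rightarrow> 'b)" where
  "cmap g x = (\<lambda>e. fst g (x (snd g e)))"

definition cap :: "(rat \<Rightarrow> ('a \<Rightarrow> 'b) \<times> (rat \<Rightarrow> rat)) \<Rightarrow> (rat \<Rightarrow> 'a) \<Rightarrow> (rat \<Rightarrow> 'b)" where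
  "cap f x = (\<lambda>e. cmap (f (e / 2)) x (e / 2))"

end

theory Submission
  imports Defs
begin

text \<open>Write \<open>G e\<close> for the uniformly continuous approximant \<open>f(e)\<close> and \<open>\<mu> e\<close> for its modulus,
  so that \<open>ap(f)(x)(e) = G (e/2) (x (\<mu> (e/2) (e/2)))\<close>. Values \<open>G e1 a\<close> and \<open>G e2 b\<close> are compared
  along a path from \<open>a\<close> to \<open>b\<close> through points supplied by the prelength property: a leg of
  length \<open>\<mu> e e\<close> moves \<open>G e\<close> by at most \<open>e\<close>, and switching from \<open>G e1\<close> to \<open>G e2\<close> at a fixed
  point costs \<open>e1 + e2\<close> by regularity of \<open>f\<close>. For \<open>ap(f)\<close> the path from
  \<open>x1 (\<mu> (d1/2) (d1/2))\<close> to \<open>x2 (\<mu> (d2/2) (d2/2))\<close> has three legs, the middle one of length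
  \<open>\<mu> (e/3) (e/3)\<close>, and costs \<open>d1 + e + d2\<close> in total. The prelength property only splits balls
  along a strict inequality, so the last leg carries a little slack, paid for by an extra
  \<open>\<delta>\<close> in \<open>Y\<close> that closedness of the balls removes again.\<close>

lemma msp_triangle:
  "msp S E B \<Longrightarrow> 0 < e1 \<Longrightarrow> 0 < e2 \<Longrightarrow> a \<in> S \<Longrightarrow> b \<in> S \<Longrightarrow> c \<in> S
    \<Longrightarrow> B e1 a b \<Longrightarrow> B e2 b c \<Longrightarrow> B (e1 + e2) a c"
  unfolding msp_def by blast

lemma msp_closed:
  "msp S E B \<Longrightarrow> 0 < e \<Longrightarrow> a \<in> S \<Longrightarrow> b \<in> S \<Longrightarrow> (\<And>d. 0 < d \<Longrightarrow> B (e + d) a b) \<Longrightarrow> B e a b"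
  unfolding msp_def by blast

lemma prelength_split:
  assumes "prelength S E B" "0 < p" "0 < q" "0 < t" "a \<in> S" "b \<in> S" "B (p + q) a b"
  shows "\<exists>c\<in>S. B p a c \<and> B (q + t) c b"
proof -
  have "p + q < p + (q + t)" "0 < p + q" "0 < q + t" using assms by auto
  then show ?thesis using assms unfolding prelength_def by blast
qed

lemma prelength_uc_ball_add:
  assumes X: "prelength SX EqX BX" and Y: "msp SY EqY BY" and g: "(g, \<mu>) \<in> uc SX BX SY BY"
    and "0 < e1" "0 < e2" "a \<in> SX" "b \<in> SX" "0 < r" "r < \<mu> e1 + \<mu> e2" "BX r a b"
  shows "BY (e1 + e2) (g a) (g b)"
proof -
  have "0 < \<mu> e1" "0 < \<mu> e2" using g \<open>0 < e1\<close> \<open>0 < e2\<close> unfolding uc_def by auto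
  then obtain c where "c \<in> SX" "BX (\<mu> e1) a c" "BX (\<mu> e2) c b"
    using assms unfolding prelength_def by blast
  with assms have "BY e1 (g a) (g c)" "BY e2 (g c) (g b)" "g a \<in> SY" "g b \<in> SY" "g c \<in> SY"
    unfolding uc_def by auto
  then show ?thesis using msp_triangle[OF Y] \<open>0 < e1\<close> \<open>0 < e2\<close> by blast
qed

locale regular_uc_family =
  fixes SX :: "'a set" and EqX :: "'a \<Rightarrow> 'a \<Rightarrow> bool" and BX :: "rat \<Rightarrow> 'a \<Rightarrow> 'a \<Rightarrow> bool"
    and SY :: "'b set" and EqY :: "'b \<Rightarrow> 'b \<Rightarrow> bool" and BY :: "rat \<Rightarrow> 'b \<Rightarrow> 'b \<Rightarrow> bool"
    and f :: "rat \<Rightarrow> ('a \<Rightarrow> 'b) \<times> (rat \<Rightarrow> rat)"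
  assumes prelength_X: "prelength SX EqX BX"
    and msp_Y: "msp SY EqY BY"
    and regular_f: "f \<in> reg (uc SX BX SY BY) (fun_ball SX BY)"
begin

abbreviation G :: "rat \<Rightarrow> 'a \<Rightarrow> 'b" where "G e \<equiv> fst (f e)"

abbreviation \<mu> :: "rat \<Rightarrow> rat \<Rightarrow> rat" where "\<mu> e \<equiv> snd (f e)"

lemma uc_approximant: "0 < e \<Longrightarrow> (G e, \<mu> e) \<in> uc SX BX SY BY"
  using regular_f unfolding reg_def by auto

lemma approximant_in: "0 < e \<Longrightarrow> a \<in> SX \<Longrightarrow> G e a \<in> SY"
  using uc_approximant[of e] unfolding uc_def by auto

lemma modulus_pos: "0 < e \<Longrightarrow> 0 < d \<Longrightarrow> 0 < \<mu> e d"
  using uc_approximant[of e] unfolding uc_def by auto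

lemma approximant_modulus:
  "0 < e \<Longrightarrow> 0 < d \<Longrightarrow> a \<in> SX \<Longrightarrow> b \<in> SX \<Longrightarrow> BX (\<mu> e d) a b \<Longrightarrow> BY d (G e a) (G e b)"
  using uc_approximant[of e] unfolding uc_def by auto

lemma approximants_close: "0 < e1 \<Longrightarrow> 0 < e2 \<Longrightarrow> a \<in> SX \<Longrightarrow> BY (e1 + e2) (G e1 a) (G e2 a)"
  using regular_f unfolding reg_def fun_ball_def by auto

lemma triangle_Y:
  "BY e1 a b \<Longrightarrow> BY e2 b c \<Longrightarrow> 0 < e1 \<Longrightarrow> 0 < e2 \<Longrightarrow> a \<in> SY \<Longrightarrow> b \<in> SY \<Longrightarrow> c \<in> SY
    \<Longrightarrow> BY (e1 + e2) a c"
  using msp_triangle[OF msp_Y] by blast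

lemma approximant_shift:
  assumes "0 < e" "0 < \<eta>" "a \<in> SX" "c \<in> SX" "BX (\<mu> e e) a c"
  shows "BY (2 * e + \<eta>) (G e a) (G \<eta> c)"
proof -
  have "BY e (G e a) (G e c)" using approximant_modulus assms by blast
  moreover have "BY (e + \<eta>) (G e c) (G \<eta> c)" using approximants_close assms by blast
  ultimately have "BY (e + (e + \<eta>)) (G e a) (G \<eta> c)"
    by (rule triangle_Y) (use approximant_in assms in auto)
  then show ?thesis by (simp add: algebra_simps)
qed

lemma approximant_ball_slack:
  assumes "0 < e1" "0 < e2" "0 < \<delta>" "a \<in> SX" "b \<in> SX"
    and "0 < r" "r < \<mu> e2 e2 + \<mu> e2 \<delta>" "BX (\<mu> e1 e1 + r) a b"
  shows "BY (2 * e1 + 2 * e2 + \<delta>) (G e1 a) (G e2 b)"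
proof -
  define t where "t = (\<mu> e2 e2 + \<mu> e2 \<delta> - r) / 2"
  have t: "0 < t" "r + t < \<mu> e2 e2 + \<mu> e2 \<delta>"
    using assms(7) unfolding t_def by (simp_all add: field_simps)
  obtain c where c: "c \<in> SX" "BX (\<mu> e1 e1) a c" "BX (r + t) c b"
    using prelength_split[OF prelength_X modulus_pos[OF assms(1,1)] assms(6) t(1) assms(4,5,8)] by blast
  have "BY (2 * e1 + e2) (G e1 a) (G e2 c)"
    using approximant_shift[OF assms(1,2,4) c(1,2)] .
  moreover have "BY (e2 + \<delta>) (G e2 c) (G e2 b)"
    using prelength_uc_ball_add[OF prelength_X msp_Y uc_approximant[OF assms(2)] assms(2,3) c(1) assms(5)]
      t c(3) assms(6) by (meson add_pos_pos)
  ultimately have "BY (2 * e1 + e2 + (e2 + \<delta>)) (G e1 a) (G e2 b)"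
    by (rule triangle_Y) (use approximant_in c(1) assms(1-5) in auto)
  then show ?thesis by (simp add: algebra_simps)
qed

lemma approximant_ball:
  assumes "0 < e1" "0 < e2" "a \<in> SX" "b \<in> SX" "BX (\<mu> e1 e1 + \<mu> e2 e2) a b"
  shows "BY (2 * e1 + 2 * e2) (G e1 a) (G e2 b)"
proof (rule msp_closed[OF msp_Y])
  fix \<delta> :: rat
  assume "0 < \<delta>"
  with assms show "BY (2 * e1 + 2 * e2 + \<delta>) (G e1 a) (G e2 b)"
    by (intro approximant_ball_slack[where r = "\<mu> e2 e2"]) (simp_all add: modulus_pos)
qed (use assms approximant_in in auto)

lemma approximant_ball3:
  assumes "0 < e1" "0 < \<eta>" "0 < e2" "a \<in> SX" "b \<in> SX"
    and "BX (\<mu> e1 e1 + \<mu> \<eta> \<eta> + \<mu> e2 e2) a b"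
  shows "BY (2 * e1 + 3 * \<eta> + 2 * e2) (G e1 a) (G e2 b)"
proof (rule msp_closed[OF msp_Y])
  fix \<delta> :: rat
  assume "0 < \<delta>"
  define s where "s = \<mu> e2 \<delta> / 2"
  have s: "0 < s" "s < \<mu> e2 \<delta>" using modulus_pos[OF assms(3) \<open>0 < \<delta>\<close>] unfolding s_def by auto
  have "0 < \<mu> \<eta> \<eta> + \<mu> e2 e2" using modulus_pos assms(2,3) by (simp add: add_pos_pos)
  moreover have "BX (\<mu> e1 e1 + (\<mu> \<eta> \<eta> + \<mu> e2 e2)) a b" using assms(6) by (simp add: add.assoc)
  ultimately obtain p where p: "p \<in> SX" "BX (\<mu> e1 e1) a p" "BX (\<mu> \<eta> \<eta> + \<mu> e2 e2 + s) p b"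
    using prelength_split[OF prelength_X modulus_pos[OF assms(1,1)] _ s(1) assms(4,5)] by blast
  have "BY (2 * e1 + \<eta>) (G e1 a) (G \<eta> p)"
    using approximant_shift[OF assms(1,2,4) p(1,2)] .
  moreover have "BY (2 * \<eta> + 2 * e2 + \<delta>) (G \<eta> p) (G e2 b)"
  proof (rule approximant_ball_slack[OF assms(2,3) \<open>0 < \<delta>\<close> p(1) assms(5)])
    show "0 < \<mu> e2 e2 + s" using modulus_pos[OF assms(3,3)] s(1) by simp
    show "\<mu> e2 e2 + s < \<mu> e2 e2 + \<mu> e2 \<delta>" using s(2) by simp
    show "BX (\<mu> \<eta> \<eta> + (\<mu> e2 e2 + s)) p b" using p(3) by (simp add: add.assoc)
  qed
  ultimately have "BY (2 * e1 + \<eta> + (2 * \<eta> + 2 * e2 + \<delta>)) (G e1 a) (G e2 b)"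
    by (rule triangle_Y) (use approximant_in p(1) assms(1-5) \<open>0 < \<delta>\<close> in auto)
  then show "BY (2 * e1 + 3 * \<eta> + 2 * e2 + \<delta>) (G e1 a) (G e2 b)" by (simp add: algebra_simps)
qed (use assms approximant_in in auto)

lemma cap_eq: "cap f x e = G (e / 2) (x (\<mu> (e / 2) (e / 2)))"
  unfolding cap_def cmap_def by simp

lemma cap_reg:
  assumes x: "x \<in> reg SX BX"
  shows "cap f x \<in> reg SY BY"
proof -
  have x_in: "x d \<in> SX" if "0 < d" for d using x that unfolding reg_def by blast
  have "cap f x e \<in> SY" if "0 < e" for e
    unfolding cap_eq using approximant_in x_in modulus_pos that by simp
  moreover have "BY (e1 + e2) (cap f x e1) (cap f x e2)" if "0 < e1" "0 < e2" for e1 e2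
  proof -
    let ?m1 = "\<mu> (e1 / 2) (e1 / 2)" and ?m2 = "\<mu> (e2 / 2) (e2 / 2)"
    have "0 < ?m1" "0 < ?m2" using modulus_pos that by simp_all
    moreover have "BX (?m1 + ?m2) (x ?m1) (x ?m2)" using calculation x unfolding reg_def by blast
    ultimately have "BY (2 * (e1 / 2) + 2 * (e2 / 2)) (G (e1 / 2) (x ?m1)) (G (e2 / 2) (x ?m2))"
      by (intro approximant_ball x_in) (use that in auto)
    then show ?thesis unfolding cap_eq by simp
  qed
  ultimately show ?thesis unfolding reg_def by blast
qed

lemma cap_C_ball:
  assumes "0 < e" "x1 \<in> reg SX BX" "x2 \<in> reg SX BX" "C_ball BX (\<mu> (e / 3) (e / 3)) x1 x2"
  shows "C_ball BY e (cap f x1) (cap f x2)"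
  unfolding C_ball_def
proof (intro allI impI)
  fix d1 d2 :: rat
  assume "0 < d1" "0 < d2"
  let ?n1 = "\<mu> (d1 / 2) (d1 / 2)" and ?n2 = "\<mu> (d2 / 2) (d2 / 2)"
  have "0 < ?n1" "0 < ?n2" using modulus_pos \<open>0 < d1\<close> \<open>0 < d2\<close> by simp_all
  then have "x1 ?n1 \<in> SX" "x2 ?n2 \<in> SX"
    and "BX (?n1 + \<mu> (e / 3) (e / 3) + ?n2) (x1 ?n1) (x2 ?n2)"
    using assms(2-4) unfolding reg_def C_ball_def by (auto simp: add_ac)
  then have "BY (2 * (d1 / 2) + 3 * (e / 3) + 2 * (d2 / 2)) (G (d1 / 2) (x1 ?n1)) (G (d2 / 2) (x2 ?n2))"
    by (intro approximant_ball3) (use \<open>0 < e\<close> \<open>0 < d1\<close> \<open>0 < d2\<close> in auto)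
  then show "BY (e + d1 + d2) (cap f x1 d1) (cap f x2 d2)"
    unfolding cap_eq by (simp add: algebra_simps)
qed

end

theorem theorem27:
  fixes SX :: "'a set" and EqX :: "'a \<Rightarrow> 'a \<Rightarrow> bool" and BX :: "rat \<Rightarrow> 'a \<Rightarrow> 'a \<Rightarrow> bool"
    and SY :: "'b set" and EqY :: "'b \<Rightarrow> 'b \<Rightarrow> bool" and BY :: "rat \<Rightarrow> 'b \<Rightarrow> 'b \<Rightarrow> bool"
    and f :: "rat \<Rightarrow> ('a \<Rightarrow> 'b) \<times> (rat \<Rightarrow> rat)"
  assumes "prelength SX EqX BX"
    and "msp SY EqY BY"
    and "f \<in> reg (uc SX BX SY BY) (fun_ball SX BY)"
  shows "(cap f, \<lambda>e. snd (f (e / 3)) (e / 3)) \<in> uc (reg SX BX) (C_ball BX) (reg SY BY) (C_ball BY)"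
proof -
  interpret regular_uc_family SX EqX BX SY EqY BY f
    using assms by unfold_locales
  show ?thesis
    unfolding uc_def using cap_reg modulus_pos cap_C_ball by simp
qed

end
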